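(* Let $f:\mathbb{R}\to[0,\infty)$ be a Borel-measurable, even, nonnegative function satisfying $\int_{\mathbb{R}} (1\wedge |\xi|^2)\, f(\xi)\,d\xi<\infty$, and let $X=\{X(t),t\in\mathbb{R}\}$ be the centered Gaussian process with stationary increments defined by $$X(t)=\int_{\mathbb{R}} \big(e^{it\xi}-1\big)\, f^{1/2}(\xi)\,dW(\xi),\qquad t\in\mathbb{R},$$ where $W$ is a complex Wiener measure (Hermitian, so that $X$ is real-valued). Let $\psi:\mathbb{R}\to\mathbb{R}$ satisfy condition $W(0,0,0)$, i.e. $\int_{\mathbb{R}}|\psi(t)|\,dt<\infty$, $\int_{\mathbb{R}}\psi(t)\,dt=0$, $\int_{\mathbb{R}}|t\,\psi(t)|\,dt<\infty$, there is $C_\psi>0$ with $|\psi(t)|\le C_\psi$ for all $t\in\mathbb{R}$, and there is $C'_\psi>0$ with $|\widehat\psi(\xi)|+|\widehat\psi'(\xi)|\le C'_\psi$ for all $\xi\in\mathbb{R}$. Then for every $(a,b)\in(0,\infty)\times\mathbb{R}$ the wavelet coefficient $$d_\psi(a,b):=a^{-1/2}\int_{\mathbb{R}}\psi\Big(\frac{t-b}{a}\Big)X(t)\,dt$$ is well defined and admits the frequency representation $$d_\psi(a,b)=\sqrt{a}\int_{\mathbb{R}} e^{ib\xi}\,\overline{\widehat\psi}(a\xi)\,f^{1/2}(\xi)\,dW(\xi).$$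
   Context: $\widehat\psi$ denotes the Fourier transform of $\psi$ and $\overline{\widehat\psi}$ its complex conjugate. $1\wedge x=\min(1,x)$. *)

theory Defs
  imports "HOL-Probability.Probability"
begin

definition fourier :: "(real \<Rightarrow> real) \<Rightarrow> real \<Rightarrow> complex" where
  "fourier \<psi> \<xi> = integral\<^sup>L lborel (\<lambda>t. cis (- (\<xi> * t)) * complex_of_real (\<psi> t))"

definition square_integrable :: "(real \<Rightarrow> complex) \<Rightarrow> bool" where
  "square_integrable g \<longleftrightarrow> g \<in> borel_measurable lborel \<and>
     integrable lborel (\<lambda>\<xi>. (cmod (g \<xi>))\<^sup>2)"

text \<open>A complex (Hermitian) Wiener measure W on the real line over the probability
  space M, given through its stochastic integral I g = integral of g dW, defined for all
  square-integrable g: linear, isometric (E[I g conj(I h)] = integral of g conj h),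
  Hermitian (conj(I g) = I(conj g(-.))), and centred Gaussian (every Re(I g) is a centred
  normal variable; by linearity all finite real linear combinations of real and imaginary
  parts of the I g are then jointly Gaussian).\<close>
definition complex_wiener_integral ::
  "'w measure \<Rightarrow> ((real \<Rightarrow> complex) \<Rightarrow> 'w \<Rightarrow> complex) \<Rightarrow> bool" where
  "complex_wiener_integral M I \<longleftrightarrow>
     prob_space M \<and>
     (\<forall>g. square_integrable g \<longrightarrow> I g \<in> borel_measurable M) \<and>
     (\<forall>g h c. square_integrable g \<longrightarrow> square_integrable h \<longrightarrow>
        (AE \<omega> in M. I (\<lambda>\<xi>. g \<xi> + c * h \<xi>) \<omega> = I g \<omega> + c * I h \<omega>)) \<and>
     (\<forall>g h. square_integrable g \<longrightarrow> square_integrable h \<longrightarrow>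
        integrable M (\<lambda>\<omega>. I g \<omega> * cnj (I h \<omega>)) \<and>
        integral\<^sup>L M (\<lambda>\<omega>. I g \<omega> * cnj (I h \<omega>)) =
          integral\<^sup>L lborel (\<lambda>\<xi>. g \<xi> * cnj (h \<xi>))) \<and>
     (\<forall>g. square_integrable g \<longrightarrow>
        (AE \<omega> in M. cnj (I g \<omega>) = I (\<lambda>\<xi>. cnj (g (- \<xi>))) \<omega>)) \<and>
     (\<forall>g. square_integrable g \<longrightarrow>
        (\<forall>s::real. integral\<^sup>L M (\<lambda>\<omega>. cis (s * Re (I g \<omega>))) =
           complex_of_real (exp (- (s\<^sup>2 * integral\<^sup>L M (\<lambda>\<omega>. (Re (I g \<omega>))\<^sup>2)) / 2))))"

end

theory Submission
  imports Defs
begin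

(* With phi(t) = a^(-1/2) psi((t - b)/a) the wavelet coefficient is the pathwise integral Z of
   phi X. From |e^(it xi) - 1|^2 <= (2 + |t|)^2 min(1, xi^2) we get E X(t)^2 <= K (2 + |t|)^2, and
   the moment conditions on psi make phi(t) (2 + |t|) integrable. Fubini then gives pathwise
   integrability, Z in L^2 (via a weighted Cauchy-Schwarz inequality), and E[Z conj(I k)] = <H, k>
   for every square-integrable k, where H(xi) = (int phi(t) (e^(it xi) - 1) dt) f^(1/2)(xi)
   = sqrt a e^(ib xi) conj(psi^(a xi)) f^(1/2)(xi), the -1 dropping out because psi has mean zero.
   Hence Z - I H is orthogonal to every I k, so to every X(t) and to Z itself: E|Z - I H|^2 = 0. *)

lemma cis_measurable[measurable]: "cis \<in> borel_measurable borel"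
  by (intro borel_measurable_continuous_onI continuous_intros)

lemma cnj_measurable[measurable]: "cnj \<in> borel_measurable borel"
  by (intro borel_measurable_continuous_onI continuous_intros)

lemma norm_cis_minus_one_le_abs: "cmod (cis x - 1) \<le> \<bar>x\<bar>"
  using iexp_approx1[of x 0] by (simp add: cis_conv_exp)

lemma norm_cis_minus_one_sq_le: "(cmod (cis (t * \<xi>) - 1))\<^sup>2 \<le> (2 + \<bar>t\<bar>)\<^sup>2 * min 1 (\<xi>\<^sup>2)"
proof (cases "\<xi>\<^sup>2 \<le> 1")
  case True
  have "(cmod (cis (t * \<xi>) - 1))\<^sup>2 \<le> t\<^sup>2 * \<xi>\<^sup>2"
    using power_mono[OF norm_cis_minus_one_le_abs[of "t * \<xi>"], of 2]
    by (simp add: power_mult_distrib)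
  also have "\<dots> \<le> (2 + \<bar>t\<bar>)\<^sup>2 * \<xi>\<^sup>2"
    by (intro mult_right_mono) (simp_all add: abs_le_square_iff[symmetric])
  finally show ?thesis using True by simp
next
  case False
  have "cmod (cis (t * \<xi>) - 1) \<le> 2 + \<bar>t\<bar>"
    using norm_triangle_ineq4[of "cis (t * \<xi>)" 1] by simp
  then have "(cmod (cis (t * \<xi>) - 1))\<^sup>2 \<le> (2 + \<bar>t\<bar>)\<^sup>2"
    by (simp add: power_mono)
  then show ?thesis using False by simp
qed

lemma integrable_mult_square_integrable:
  fixes u v :: "'a \<Rightarrow> complex"
  assumes [measurable]: "u \<in> borel_measurable N" "v \<in> borel_measurable N"
    and "integrable N (\<lambda>y. (norm (u y))\<^sup>2)" "integrable N (\<lambda>y. (norm (v y))\<^sup>2)"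
  shows "integrable N (\<lambda>y. u y * v y)"
proof (rule Bochner_Integration.integrable_bound)
  show "integrable N (\<lambda>y. ((norm (u y))\<^sup>2 + (norm (v y))\<^sup>2) / 2)"
    using assms(3,4) by simp
  show "AE y in N. norm (u y * v y) \<le> norm (((norm (u y))\<^sup>2 + (norm (v y))\<^sup>2) / 2)"
  proof (rule AE_I2)
    fix y
    show "norm (u y * v y) \<le> norm (((norm (u y))\<^sup>2 + (norm (v y))\<^sup>2) / 2)"
      using sum_squares_bound[of "norm (u y)" "norm (v y)"] by (simp add: norm_mult)
  qed
qed simp

lemma square_integrable_diff:
  fixes u v :: "'a \<Rightarrow> complex"
  assumes [measurable]: "u \<in> borel_measurable N" "v \<in> borel_measurable N"
    and "integrable N (\<lambda>y. (norm (u y))\<^sup>2)" "integrable N (\<lambda>y. (norm (v y))\<^sup>2)"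
  shows "integrable N (\<lambda>y. (norm (u y - v y))\<^sup>2)"
proof (rule Bochner_Integration.integrable_bound)
  show "integrable N (\<lambda>y. 2 * ((norm (u y))\<^sup>2 + (norm (v y))\<^sup>2))"
    using assms(3,4) by simp
  show "AE y in N. norm ((norm (u y - v y))\<^sup>2) \<le> norm (2 * ((norm (u y))\<^sup>2 + (norm (v y))\<^sup>2))"
  proof (rule AE_I2)
    fix y
    have "norm (u y - v y) \<le> norm (u y) + norm (v y)" by (rule norm_triangle_ineq4)
    then have "(norm (u y - v y))\<^sup>2 \<le> (norm (u y) + norm (v y))\<^sup>2" by (simp add: power_mono)
    also have "\<dots> \<le> 2 * ((norm (u y))\<^sup>2 + (norm (v y))\<^sup>2)"
      using sum_squares_bound[of "norm (u y)" "norm (v y)"] by (simp add: power2_sum)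
    finally show "norm ((norm (u y - v y))\<^sup>2) \<le> norm (2 * ((norm (u y))\<^sup>2 + (norm (v y))\<^sup>2))"
      by simp
  qed
qed simp

lemma integral_norm_mult_le_weighted:
  fixes u v :: "'a \<Rightarrow> complex"
  assumes "c > 0" and [measurable]: "u \<in> borel_measurable N" "v \<in> borel_measurable N"
    and u2: "integrable N (\<lambda>y. (norm (u y))\<^sup>2)" and v2: "integrable N (\<lambda>y. (norm (v y))\<^sup>2)"
  shows "(\<integral>y. norm (u y * v y) \<partial>N)
           \<le> (c * (\<integral>y. (norm (u y))\<^sup>2 \<partial>N) + (\<integral>y. (norm (v y))\<^sup>2 \<partial>N) / c) / 2"
proof -
  have "(\<integral>y. norm (u y * v y) \<partial>N) \<le> (\<integral>y. (c * (norm (u y))\<^sup>2 + (norm (v y))\<^sup>2 / c) / 2 \<partial>N)"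
  proof (rule integral_mono)
    show "integrable N (\<lambda>y. norm (u y * v y))"
      using integrable_mult_square_integrable[OF assms(2-5)] by (rule integrable_norm)
    show "integrable N (\<lambda>y. (c * (norm (u y))\<^sup>2 + (norm (v y))\<^sup>2 / c) / 2)"
      using u2 v2 by simp
    fix y
    have "0 \<le> (c * norm (u y) - norm (v y))\<^sup>2 / c" using \<open>c > 0\<close> by simp
    then show "norm (u y * v y) \<le> (c * (norm (u y))\<^sup>2 + (norm (v y))\<^sup>2 / c) / 2"
      using \<open>c > 0\<close> by (simp add: norm_mult power2_eq_square field_simps)
  qed
  also have "\<dots> = (c * (\<integral>y. (norm (u y))\<^sup>2 \<partial>N) + (\<integral>y. (norm (v y))\<^sup>2 \<partial>N) / c) / 2"
    using u2 v2 by simp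
  finally show ?thesis .
qed

lemma square_le_square_nn_integral_abs:
  fixes h :: "'a \<Rightarrow> real"
  shows "ennreal ((integral\<^sup>L N h)\<^sup>2) \<le> (\<integral>\<^sup>+t. ennreal \<bar>h t\<bar> \<partial>N)\<^sup>2"
proof (cases "integrable N h")
  case True
  have "ennreal ((integral\<^sup>L N h)\<^sup>2) = (ennreal \<bar>integral\<^sup>L N h\<bar>)\<^sup>2"
    by (simp add: ennreal_power)
  also have "\<dots> \<le> (\<integral>\<^sup>+t. ennreal \<bar>h t\<bar> \<partial>N)\<^sup>2"
    using integral_norm_bound_ennreal[OF True] by (intro power_mono) simp_all
  finally show ?thesis .
qed (simp add: not_integrable_integral_eq)

lemma nn_integral_weighted_Cauchy_Schwarz:
  fixes \<phi> w x :: "'a \<Rightarrow> real"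
  assumes [measurable]: "\<phi> \<in> borel_measurable N" "w \<in> borel_measurable N" "x \<in> borel_measurable N"
    and w_pos: "\<And>t. w t > 0"
  shows "(\<integral>\<^sup>+t. ennreal (\<bar>\<phi> t\<bar> * \<bar>x t\<bar>) \<partial>N)\<^sup>2
           \<le> (\<integral>\<^sup>+t. ennreal (\<bar>\<phi> t\<bar> * w t) \<partial>N) * (\<integral>\<^sup>+t. ennreal (\<bar>\<phi> t\<bar> / w t * (x t)\<^sup>2) \<partial>N)"
proof -
  let ?F = "\<lambda>t. ennreal (sqrt (\<bar>\<phi> t\<bar> * w t))"
  let ?G = "\<lambda>t. ennreal (sqrt (\<bar>\<phi> t\<bar> / w t) * \<bar>x t\<bar>)"
  have "?F t * ?G t = ennreal (\<bar>\<phi> t\<bar> * \<bar>x t\<bar>)" for t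
  proof -
    have "sqrt (\<bar>\<phi> t\<bar> * w t) * sqrt (\<bar>\<phi> t\<bar> / w t) = \<bar>\<phi> t\<bar>"
      using w_pos[of t] by (simp add: real_sqrt_mult[symmetric])
    then show ?thesis
      using w_pos[of t] by (simp add: ennreal_mult[symmetric] mult.assoc[symmetric])
  qed
  moreover have "?F t ^ 2 = ennreal (\<bar>\<phi> t\<bar> * w t)" for t
    using w_pos[of t] by (simp add: ennreal_power)
  moreover have "?G t ^ 2 = ennreal (\<bar>\<phi> t\<bar> / w t * (x t)\<^sup>2)" for t
    using w_pos[of t] by (simp add: ennreal_power power_mult_distrib)
  ultimately show ?thesis
    using Cauchy_Schwarz_nn_integral[of ?F N ?G] by simp
qed

section \<open>Fubini for a weighted kernel against square-integrable functions\<close>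

lemma integrable_weighted_product:
  fixes G :: "real \<Rightarrow> 'a \<Rightarrow> complex" and U :: "'a \<Rightarrow> complex" and \<phi> w :: "real \<Rightarrow> real"
  assumes "sigma_finite_measure N"
    and G_meas[measurable]: "(\<lambda>(t, y). G t y) \<in> borel_measurable (lborel \<Otimes>\<^sub>M N)"
    and [measurable]: "U \<in> borel_measurable N" "\<phi> \<in> borel_measurable borel" "w \<in> borel_measurable borel"
    and w_pos: "\<And>t. w t > 0"
    and \<phi>_w: "integrable lborel (\<lambda>t. \<bar>\<phi> t\<bar> * w t)"
    and G2: "\<And>t. integrable N (\<lambda>y. (norm (G t y))\<^sup>2)"
    and G2_le: "\<And>t. (\<integral>y. (norm (G t y))\<^sup>2 \<partial>N) \<le> K * (w t)\<^sup>2"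
    and U2: "integrable N (\<lambda>y. (norm (U y))\<^sup>2)"
  shows "integrable (lborel \<Otimes>\<^sub>M N) (\<lambda>(t, y). complex_of_real (\<phi> t) * G t y * U y)"
proof -
  interpret N: sigma_finite_measure N by fact
  interpret pair_sigma_finite lborel N
    by (intro pair_sigma_finite.intro sigma_finite_lborel N.sigma_finite_measure_axioms)
  have [measurable]: "G t \<in> borel_measurable N" for t
    using measurable_Pair2[OF G_meas] by simp
  define E where "E = (\<integral>y. (norm (U y))\<^sup>2 \<partial>N)"
  have section_le: "(\<integral>y. norm (G t y * U y) \<partial>N) \<le> w t * ((\<bar>K\<bar> + E) / 2)" for t
  proof -
    have "(\<integral>y. norm (G t y * U y) \<partial>N) \<le> (1 / w t * (\<integral>y. (norm (G t y))\<^sup>2 \<partial>N) + E / (1 / w t)) / 2"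
      unfolding E_def using w_pos[of t] by (intro integral_norm_mult_le_weighted G2 U2) simp_all
    also have "\<dots> \<le> (1 / w t * (K * (w t)\<^sup>2) + E * w t) / 2"
      using G2_le[of t] w_pos[of t] by (simp add: divide_right_mono)
    also have "\<dots> \<le> w t * ((\<bar>K\<bar> + E) / 2)"
      using w_pos[of t] by (simp add: power2_eq_square field_simps)
    finally show ?thesis .
  qed
  show ?thesis
  proof (rule Fubini_integrable)
    show "AE t in lborel. integrable N (\<lambda>y. case (t, y) of (t, y) \<Rightarrow> complex_of_real (\<phi> t) * G t y * U y)"
      using integrable_mult_square_integrable[OF _ _ G2 U2] by (simp add: mult.assoc)
    show "integrable lborel (\<lambda>t. \<integral>y. norm (case (t, y) of (t, y) \<Rightarrow> complex_of_real (\<phi> t) * G t y * U y) \<partial>N)"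
    proof (rule Bochner_Integration.integrable_bound)
      show "integrable lborel (\<lambda>t. \<bar>\<phi> t\<bar> * w t * ((\<bar>K\<bar> + E) / 2))"
        using \<phi>_w by simp
      show "AE t in lborel. norm (\<integral>y. norm (case (t, y) of (t, y) \<Rightarrow> complex_of_real (\<phi> t) * G t y * U y) \<partial>N)
              \<le> norm (\<bar>\<phi> t\<bar> * w t * ((\<bar>K\<bar> + E) / 2))"
      proof (rule AE_I2)
        fix t
        have "0 \<le> E" unfolding E_def by simp
        then show "norm (\<integral>y. norm (case (t, y) of (t, y) \<Rightarrow> complex_of_real (\<phi> t) * G t y * U y) \<partial>N)
              \<le> norm (\<bar>\<phi> t\<bar> * w t * ((\<bar>K\<bar> + E) / 2))"
          using mult_left_mono[OF section_le, of "\<bar>\<phi> t\<bar>" t] w_pos[of t]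
          by (simp add: norm_mult mult.assoc abs_mult)
      qed
    qed (rule N.borel_measurable_lebesgue_integral, simp)
  qed measurable
qed

lemma integral_weighted_product_swap:
  fixes G :: "real \<Rightarrow> 'a \<Rightarrow> complex" and U :: "'a \<Rightarrow> complex" and \<phi> w :: "real \<Rightarrow> real"
  assumes "sigma_finite_measure N"
    and "(\<lambda>(t, y). G t y) \<in> borel_measurable (lborel \<Otimes>\<^sub>M N)"
    and "U \<in> borel_measurable N" "\<phi> \<in> borel_measurable borel" "w \<in> borel_measurable borel"
    and "\<And>t. w t > 0"
    and "integrable lborel (\<lambda>t. \<bar>\<phi> t\<bar> * w t)"
    and "\<And>t. integrable N (\<lambda>y. (norm (G t y))\<^sup>2)"
    and "\<And>t. (\<integral>y. (norm (G t y))\<^sup>2 \<partial>N) \<le> K * (w t)\<^sup>2"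
    and "integrable N (\<lambda>y. (norm (U y))\<^sup>2)"
  shows "(\<integral>y. (\<integral>t. complex_of_real (\<phi> t) * G t y \<partial>lborel) * U y \<partial>N)
           = (\<integral>t. complex_of_real (\<phi> t) * (\<integral>y. G t y * U y \<partial>N) \<partial>lborel)"
proof -
  interpret N: sigma_finite_measure N by fact
  interpret pair_sigma_finite lborel N
    by (intro pair_sigma_finite.intro sigma_finite_lborel N.sigma_finite_measure_axioms)
  have "(\<integral>y. (\<integral>t. complex_of_real (\<phi> t) * G t y * U y \<partial>lborel) \<partial>N)
          = (\<integral>t. (\<integral>y. complex_of_real (\<phi> t) * G t y * U y \<partial>N) \<partial>lborel)"
    by (rule Fubini_integral[OF integrable_weighted_product[OF assms]])
  then show ?thesis
    by (simp add: mult.assoc flip: integral_mult_left_zero)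
qed

lemma integrable_square_weighted_integral:
  fixes G :: "real \<Rightarrow> 'a \<Rightarrow> real" and \<phi> w :: "real \<Rightarrow> real"
  assumes "sigma_finite_measure N"
    and [measurable]: "(\<lambda>(t, y). G t y) \<in> borel_measurable (lborel \<Otimes>\<^sub>M N)"
      "\<phi> \<in> borel_measurable borel" "w \<in> borel_measurable borel"
    and w_pos: "\<And>t. w t > 0"
    and \<phi>_w: "integrable lborel (\<lambda>t. \<bar>\<phi> t\<bar> * w t)"
    and G2: "\<And>t. integrable N (\<lambda>y. (G t y)\<^sup>2)"
    and G2_le: "\<And>t. (\<integral>y. (G t y)\<^sup>2 \<partial>N) \<le> K * (w t)\<^sup>2"
  shows "integrable N (\<lambda>y. (\<integral>t. \<phi> t * G t y \<partial>lborel)\<^sup>2)"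
proof (rule integrableI_bounded)
  interpret N: sigma_finite_measure N by fact
  interpret pair_sigma_finite lborel N
    by (intro pair_sigma_finite.intro sigma_finite_lborel N.sigma_finite_measure_axioms)
  define A where "A = (\<integral>t. \<bar>\<phi> t\<bar> * w t \<partial>lborel)"
  define T where "T y = (\<integral>\<^sup>+t. ennreal (\<bar>\<phi> t\<bar> / w t * (G t y)\<^sup>2) \<partial>lborel)" for y
  have A_nn: "(\<integral>\<^sup>+t. ennreal (\<bar>\<phi> t\<bar> * w t) \<partial>lborel) = ennreal A"
    unfolding A_def using w_pos by (intro nn_integral_eq_integral \<phi>_w AE_I2) (simp add: less_imp_le)
  have pointwise: "ennreal ((\<integral>t. \<phi> t * G t y \<partial>lborel)\<^sup>2) \<le> ennreal A * T y" if "y \<in> space N" for y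
  proof -
    have [measurable]: "(\<lambda>t. G t y) \<in> borel_measurable borel"
      using measurable_Pair1[OF \<open>(\<lambda>(t, y). G t y) \<in> _\<close> that] by simp
    have "ennreal ((\<integral>t. \<phi> t * G t y \<partial>lborel)\<^sup>2) \<le> (\<integral>\<^sup>+t. ennreal (\<bar>\<phi> t\<bar> * \<bar>G t y\<bar>) \<partial>lborel)\<^sup>2"
      using square_le_square_nn_integral_abs[of lborel "\<lambda>t. \<phi> t * G t y"] by (simp add: abs_mult)
    also have "\<dots> \<le> ennreal A * T y"
      unfolding T_def A_nn[symmetric]
      by (rule nn_integral_weighted_Cauchy_Schwarz) (simp_all add: w_pos)
    finally show ?thesis .
  qed
  have "(\<integral>\<^sup>+y. T y \<partial>N) = (\<integral>\<^sup>+t. (\<integral>\<^sup>+y. ennreal (\<bar>\<phi> t\<bar> / w t * (G t y)\<^sup>2) \<partial>N) \<partial>lborel)"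
    unfolding T_def by (rule Fubini') measurable
  also have "\<dots> \<le> (\<integral>\<^sup>+t. ennreal (\<bar>\<phi> t\<bar> * w t * \<bar>K\<bar>) \<partial>lborel)"
  proof (rule nn_integral_mono)
    fix t
    have "(\<integral>\<^sup>+y. ennreal (\<bar>\<phi> t\<bar> / w t * (G t y)\<^sup>2) \<partial>N) = ennreal (\<bar>\<phi> t\<bar> / w t * (\<integral>y. (G t y)\<^sup>2 \<partial>N))"
      using w_pos[of t] G2[of t] by (subst nn_integral_eq_integral) (simp_all add: less_imp_le)
    also have "\<dots> \<le> ennreal (\<bar>\<phi> t\<bar> / w t * (\<bar>K\<bar> * (w t)\<^sup>2))"
      using G2_le[of t] w_pos[of t]
      by (intro ennreal_leI mult_left_mono order_trans[OF G2_le[of t]] mult_right_mono) simp_all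
    also have "\<dots> = ennreal (\<bar>\<phi> t\<bar> * w t * \<bar>K\<bar>)"
      using w_pos[of t] by (simp add: power2_eq_square)
    finally show "(\<integral>\<^sup>+y. ennreal (\<bar>\<phi> t\<bar> / w t * (G t y)\<^sup>2) \<partial>N) \<le> ennreal (\<bar>\<phi> t\<bar> * w t * \<bar>K\<bar>)" .
  qed
  also have "\<dots> = ennreal (A * \<bar>K\<bar>)"
    unfolding A_def using w_pos \<phi>_w
    by (subst nn_integral_eq_integral) (simp_all add: less_imp_le)
  finally have T_le: "(\<integral>\<^sup>+y. T y \<partial>N) \<le> ennreal (A * \<bar>K\<bar>)" .
  have [measurable]: "T \<in> borel_measurable N"
    unfolding T_def by measurable
  have "(\<integral>\<^sup>+y. ennreal (norm ((\<integral>t. \<phi> t * G t y \<partial>lborel)\<^sup>2)) \<partial>N) \<le> (\<integral>\<^sup>+y. ennreal A * T y \<partial>N)"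
    using pointwise by (intro nn_integral_mono) simp
  also have "\<dots> = ennreal A * (\<integral>\<^sup>+y. T y \<partial>N)"
    by (rule nn_integral_cmult) measurable
  also have "\<dots> < \<infinity>"
    using T_le by (simp add: ennreal_mult_less_top order.strict_trans1)
  finally show "(\<integral>\<^sup>+y. ennreal (norm ((\<integral>t. \<phi> t * G t y \<partial>lborel)\<^sup>2)) \<partial>N) < \<infinity>" .
qed measurable

section \<open>Processes given by a spectral representation\<close>

lemma complex_wiener_integral_prob_space: "complex_wiener_integral M I \<Longrightarrow> prob_space M"
  unfolding complex_wiener_integral_def by blast

lemma complex_wiener_integral_measurable:
  "complex_wiener_integral M I \<Longrightarrow> square_integrable k \<Longrightarrow> I k \<in> borel_measurable M"
  unfolding complex_wiener_integral_def by blast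

lemma complex_wiener_integral_isometry:
  assumes "complex_wiener_integral M I" "square_integrable k" "square_integrable l"
  shows "integrable M (\<lambda>\<omega>. I k \<omega> * cnj (I l \<omega>))"
    and "(\<integral>\<omega>. I k \<omega> * cnj (I l \<omega>) \<partial>M) = (\<integral>\<xi>. k \<xi> * cnj (l \<xi>) \<partial>lborel)"
  using assms unfolding complex_wiener_integral_def by blast+

lemma complex_wiener_integral_square_integrable:
  assumes "complex_wiener_integral M I" "square_integrable k"
  shows "integrable M (\<lambda>\<omega>. (norm (I k \<omega>))\<^sup>2)"
proof -
  have "integrable M (\<lambda>\<omega>. complex_of_real ((norm (I k \<omega>))\<^sup>2))"
    using complex_wiener_integral_isometry(1)[OF assms assms(2)] by (simp only: complex_norm_square)
  then show ?thesis by (rule complex_of_real_integrable_eq[THEN iffD1])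
qed

locale spectral_process =
  fixes f :: "real \<Rightarrow> real" and M :: "'a measure"
    and I :: "(real \<Rightarrow> complex) \<Rightarrow> 'a \<Rightarrow> complex" and X :: "real \<Rightarrow> 'a \<Rightarrow> real"
  assumes f_meas[measurable]: "f \<in> borel_measurable borel"
    and f_nonneg: "\<And>\<xi>. f \<xi> \<ge> 0"
    and f_int: "integrable lborel (\<lambda>\<xi>. min 1 (\<xi>\<^sup>2) * f \<xi>)"
    and W: "complex_wiener_integral M I"
    and X_meas[measurable]: "(\<lambda>(t, \<omega>). X t \<omega>) \<in> borel_measurable (lborel \<Otimes>\<^sub>M M)"
    and X_def: "\<And>t. AE \<omega> in M. complex_of_real (X t \<omega>) =
                  I (\<lambda>\<xi>. (cis (t * \<xi>) - 1) * complex_of_real (sqrt (f \<xi>))) \<omega>"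
begin

sublocale prob_space M
  by (rule complex_wiener_integral_prob_space[OF W])

definition increment_kernel :: "real \<Rightarrow> real \<Rightarrow> complex" where
  "increment_kernel t \<xi> = (cis (t * \<xi>) - 1) * complex_of_real (sqrt (f \<xi>))"

definition spectral_mass :: real where
  "spectral_mass = (\<integral>\<xi>. min 1 (\<xi>\<^sup>2) * f \<xi> \<partial>lborel)"

lemma increment_kernel_measurable[measurable]:
  "(\<lambda>(t, \<xi>). increment_kernel t \<xi>) \<in> borel_measurable (lborel \<Otimes>\<^sub>M lborel)"
  "increment_kernel t \<in> borel_measurable lborel"
  unfolding increment_kernel_def by measurable

lemma norm_increment_kernel_sq_le:
  "(norm (increment_kernel t \<xi>))\<^sup>2 \<le> (2 + \<bar>t\<bar>)\<^sup>2 * (min 1 (\<xi>\<^sup>2) * f \<xi>)"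
  using mult_right_mono[OF norm_cis_minus_one_sq_le f_nonneg[of \<xi>], of t] f_nonneg[of \<xi>]
  by (simp add: increment_kernel_def norm_mult power_mult_distrib mult.assoc)

lemma integrable_norm_increment_kernel_sq:
  "integrable lborel (\<lambda>\<xi>. (norm (increment_kernel t \<xi>))\<^sup>2)"
proof (rule Bochner_Integration.integrable_bound)
  show "integrable lborel (\<lambda>\<xi>. (2 + \<bar>t\<bar>)\<^sup>2 * (min 1 (\<xi>\<^sup>2) * f \<xi>))"
    using f_int by simp
  show "AE \<xi> in lborel. norm ((norm (increment_kernel t \<xi>))\<^sup>2) \<le> norm ((2 + \<bar>t\<bar>)\<^sup>2 * (min 1 (\<xi>\<^sup>2) * f \<xi>))"
    using norm_increment_kernel_sq_le f_nonneg by (intro AE_I2) simp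
qed simp

lemma square_integrable_increment_kernel: "square_integrable (increment_kernel t)"
  unfolding square_integrable_def using integrable_norm_increment_kernel_sq by simp

lemma integral_norm_increment_kernel_sq_le:
  "(\<integral>\<xi>. (norm (increment_kernel t \<xi>))\<^sup>2 \<partial>lborel) \<le> spectral_mass * (2 + \<bar>t\<bar>)\<^sup>2"
proof -
  have "(\<integral>\<xi>. (norm (increment_kernel t \<xi>))\<^sup>2 \<partial>lborel)
          \<le> (\<integral>\<xi>. (2 + \<bar>t\<bar>)\<^sup>2 * (min 1 (\<xi>\<^sup>2) * f \<xi>) \<partial>lborel)"
    using f_int by (intro integral_mono integrable_norm_increment_kernel_sq norm_increment_kernel_sq_le) simp
  then show ?thesis
    by (simp add: spectral_mass_def mult.commute)
qed

lemma X_eq_wiener_integral: "AE \<omega> in M. complex_of_real (X t \<omega>) = I (increment_kernel t) \<omega>"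
  using X_def[of t] by (simp add: increment_kernel_def[abs_def])

lemma X_measurable[measurable]: "X t \<in> borel_measurable M"
  using measurable_Pair2[OF X_meas] by simp

lemma wiener_integral_measurable: "square_integrable k \<Longrightarrow> I k \<in> borel_measurable M"
  by (rule complex_wiener_integral_measurable[OF W])

lemma wiener_integral_increment_kernel_measurable[measurable]:
  "I (increment_kernel t) \<in> borel_measurable M"
  by (rule wiener_integral_measurable[OF square_integrable_increment_kernel])

lemma integral_X_mult_cnj_wiener_integral:
  assumes "square_integrable k"
  shows "(\<integral>\<omega>. complex_of_real (X t \<omega>) * cnj (I k \<omega>) \<partial>M)
           = (\<integral>\<xi>. increment_kernel t \<xi> * cnj (k \<xi>) \<partial>lborel)"
proof -
  have [measurable]: "I k \<in> borel_measurable M"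
    by (rule wiener_integral_measurable[OF assms])
  have "AE \<omega> in M. complex_of_real (X t \<omega>) * cnj (I k \<omega>) = I (increment_kernel t) \<omega> * cnj (I k \<omega>)"
    using X_eq_wiener_integral[of t] by eventually_elim simp
  then have "(\<integral>\<omega>. complex_of_real (X t \<omega>) * cnj (I k \<omega>) \<partial>M)
          = (\<integral>\<omega>. I (increment_kernel t) \<omega> * cnj (I k \<omega>) \<partial>M)"
    by (rule integral_cong_AE[rotated 2]) measurable
  also have "\<dots> = (\<integral>\<xi>. increment_kernel t \<xi> * cnj (k \<xi>) \<partial>lborel)"
    by (rule complex_wiener_integral_isometry(2)[OF W square_integrable_increment_kernel assms])
  finally show ?thesis .
qed

lemma X_square_integrable: "integrable M (\<lambda>\<omega>. (X t \<omega>)\<^sup>2)"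
proof -
  have "integrable M (\<lambda>\<omega>. (norm (I (increment_kernel t) \<omega>))\<^sup>2)"
    by (rule complex_wiener_integral_square_integrable[OF W square_integrable_increment_kernel])
  moreover have "AE \<omega> in M. (norm (I (increment_kernel t) \<omega>))\<^sup>2 = (X t \<omega>)\<^sup>2"
    using X_eq_wiener_integral[of t] by eventually_elim (metis norm_of_real power2_abs)
  ultimately show ?thesis
    using square_integrable_increment_kernel by (subst integrable_cong_AE[symmetric]) auto
qed

lemma integral_X_sq_le: "(\<integral>\<omega>. (X t \<omega>)\<^sup>2 \<partial>M) \<le> spectral_mass * (2 + \<bar>t\<bar>)\<^sup>2"
proof -
  have "AE \<omega> in M. complex_of_real ((X t \<omega>)\<^sup>2) = complex_of_real (X t \<omega>) * cnj (I (increment_kernel t) \<omega>)"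
    using X_eq_wiener_integral[of t] by eventually_elim (metis complex_cnj_complex_of_real of_real_power power2_eq_square)
  then have "complex_of_real (\<integral>\<omega>. (X t \<omega>)\<^sup>2 \<partial>M)
               = (\<integral>\<omega>. complex_of_real (X t \<omega>) * cnj (I (increment_kernel t) \<omega>) \<partial>M)"
    unfolding integral_complex_of_real[symmetric] by (rule integral_cong_AE[rotated 2]) measurable
  also have "\<dots> = complex_of_real (\<integral>\<xi>. (norm (increment_kernel t \<xi>))\<^sup>2 \<partial>lborel)"
    unfolding integral_X_mult_cnj_wiener_integral[OF square_integrable_increment_kernel]
      complex_norm_square[symmetric] by (rule integral_complex_of_real)
  finally show ?thesis
    using integral_norm_increment_kernel_sq_le[of t] by simp
qed

end

locale spectral_process_functional = spectral_process +
  fixes \<phi> :: "real \<Rightarrow> real"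
  assumes \<phi>_meas[measurable]: "\<phi> \<in> borel_measurable borel"
    and \<phi>_weighted_int: "integrable lborel (\<lambda>t. \<bar>\<phi> t\<bar> * (2 + \<bar>t\<bar>))"
begin

definition pathwise_integral :: "'a \<Rightarrow> real" where
  "pathwise_integral \<omega> = (\<integral>t. \<phi> t * X t \<omega> \<partial>lborel)"

definition transfer :: "real \<Rightarrow> complex" where
  "transfer \<xi> = (\<integral>t. complex_of_real (\<phi> t) * increment_kernel t \<xi> \<partial>lborel)"

lemma integrable_kernel_X_mult:
  assumes [measurable]: "U \<in> borel_measurable M" and "integrable M (\<lambda>\<omega>. (norm (U \<omega>))\<^sup>2)"
  shows "integrable (lborel \<Otimes>\<^sub>M M) (\<lambda>(t, \<omega>). complex_of_real (\<phi> t) * complex_of_real (X t \<omega>) * U \<omega>)"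
  using X_square_integrable integral_X_sq_le assms(2)
  by (intro integrable_weighted_product[where w="\<lambda>t. 2 + \<bar>t\<bar>" and K=spectral_mass]
        \<phi>_weighted_int sigma_finite_measure) simp_all

lemma integral_pathwise_integral_mult:
  assumes [measurable]: "U \<in> borel_measurable M" and "integrable M (\<lambda>\<omega>. (norm (U \<omega>))\<^sup>2)"
  shows "(\<integral>\<omega>. complex_of_real (pathwise_integral \<omega>) * U \<omega> \<partial>M)
           = (\<integral>t. complex_of_real (\<phi> t) * (\<integral>\<omega>. complex_of_real (X t \<omega>) * U \<omega> \<partial>M) \<partial>lborel)"
  using X_square_integrable integral_X_sq_le assms(2)
  by (subst integral_weighted_product_swap[where w="\<lambda>t. 2 + \<bar>t\<bar>" and K=spectral_mass, symmetric])
     (simp_all add: pathwise_integral_def \<phi>_weighted_int sigma_finite_measure integral_complex_of_real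
       flip: of_real_mult)

lemma AE_integrable_pathwise: "AE \<omega> in M. integrable lborel (\<lambda>t. \<phi> t * X t \<omega>)"
proof -
  interpret pair_sigma_finite lborel M
    by (intro pair_sigma_finite.intro sigma_finite_lborel sigma_finite_measure)
  have "AE \<omega> in M. integrable lborel (\<lambda>t. complex_of_real (\<phi> t) * complex_of_real (X t \<omega>) * 1)"
    by (rule AE_integrable_snd[OF integrable_kernel_X_mult]) simp_all
  then show ?thesis
    by eventually_elim (simp add: complex_of_real_integrable_eq flip: of_real_mult)
qed

lemma pathwise_integral_measurable[measurable]: "pathwise_integral \<in> borel_measurable M"
  unfolding pathwise_integral_def[abs_def]
  by (rule sigma_finite_measure.borel_measurable_lebesgue_integral[OF sigma_finite_lborel]) measurable

lemma pathwise_integral_square_integrable: "integrable M (\<lambda>\<omega>. (pathwise_integral \<omega>)\<^sup>2)"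
  unfolding pathwise_integral_def
  by (rule integrable_square_weighted_integral[where w="\<lambda>t. 2 + \<bar>t\<bar>" and K=spectral_mass])
    (simp_all add: sigma_finite_measure \<phi>_weighted_int X_square_integrable integral_X_sq_le)

lemma transfer_eq:
  "transfer \<xi> = (\<integral>t. complex_of_real (\<phi> t) * (cis (t * \<xi>) - 1) \<partial>lborel) * complex_of_real (sqrt (f \<xi>))"
  unfolding transfer_def increment_kernel_def by (simp only: integral_mult_left_zero[symmetric] mult.assoc)

lemma transfer_measurable[measurable]: "transfer \<in> borel_measurable lborel"
  unfolding transfer_def[abs_def]
  by (rule sigma_finite_measure.borel_measurable_lebesgue_integral[OF sigma_finite_lborel]) measurable

lemma norm_transfer_le:
  "norm (transfer \<xi>) \<le> (\<integral>t. \<bar>\<phi> t\<bar> * (2 + \<bar>t\<bar>) \<partial>lborel) * sqrt (min 1 (\<xi>\<^sup>2) * f \<xi>)"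
proof -
  have kernel_le: "norm (increment_kernel t \<xi>) \<le> (2 + \<bar>t\<bar>) * sqrt (min 1 (\<xi>\<^sup>2) * f \<xi>)" for t
    using real_sqrt_le_mono[OF norm_increment_kernel_sq_le[of t \<xi>]]
    by (simp add: real_sqrt_mult)
  have "norm (transfer \<xi>) \<le> (\<integral>t. norm (complex_of_real (\<phi> t) * increment_kernel t \<xi>) \<partial>lborel)"
    unfolding transfer_def by (rule integral_norm_bound)
  also have "\<dots> \<le> (\<integral>t. \<bar>\<phi> t\<bar> * (2 + \<bar>t\<bar>) * sqrt (min 1 (\<xi>\<^sup>2) * f \<xi>) \<partial>lborel)"
  proof (rule integral_mono')
    show "integrable lborel (\<lambda>t. \<bar>\<phi> t\<bar> * (2 + \<bar>t\<bar>) * sqrt (min 1 (\<xi>\<^sup>2) * f \<xi>))"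
      using \<phi>_weighted_int by simp
    show "norm (complex_of_real (\<phi> t) * increment_kernel t \<xi>) \<le> \<bar>\<phi> t\<bar> * (2 + \<bar>t\<bar>) * sqrt (min 1 (\<xi>\<^sup>2) * f \<xi>)" for t
      using mult_left_mono[OF kernel_le, of "\<bar>\<phi> t\<bar>" t] by (simp add: norm_mult mult.assoc)
  qed (simp add: f_nonneg)
  finally show ?thesis by simp
qed

lemma square_integrable_transfer: "square_integrable transfer"
  unfolding square_integrable_def
proof
  show "transfer \<in> borel_measurable lborel" by measurable
  define A where "A = (\<integral>t. \<bar>\<phi> t\<bar> * (2 + \<bar>t\<bar>) \<partial>lborel)"
  show "integrable lborel (\<lambda>\<xi>. (norm (transfer \<xi>))\<^sup>2)"
  proof (rule Bochner_Integration.integrable_bound)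
    show "integrable lborel (\<lambda>\<xi>. A\<^sup>2 * (min 1 (\<xi>\<^sup>2) * f \<xi>))"
      using f_int by simp
    show "AE \<xi> in lborel. norm ((norm (transfer \<xi>))\<^sup>2) \<le> norm (A\<^sup>2 * (min 1 (\<xi>\<^sup>2) * f \<xi>))"
    proof (rule AE_I2)
      fix \<xi>
      have "(norm (transfer \<xi>))\<^sup>2 \<le> (A * sqrt (min 1 (\<xi>\<^sup>2) * f \<xi>))\<^sup>2"
        unfolding A_def by (intro power_mono norm_transfer_le) simp
      then show "norm ((norm (transfer \<xi>))\<^sup>2) \<le> norm (A\<^sup>2 * (min 1 (\<xi>\<^sup>2) * f \<xi>))"
        using f_nonneg[of \<xi>] by (simp add: power_mult_distrib)
    qed
  qed measurable
qed

lemma integral_pathwise_integral_mult_cnj_wiener_integral: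
  assumes k: "square_integrable k"
  shows "(\<integral>\<omega>. complex_of_real (pathwise_integral \<omega>) * cnj (I k \<omega>) \<partial>M)
           = (\<integral>\<xi>. transfer \<xi> * cnj (k \<xi>) \<partial>lborel)"
proof -
  have [measurable]: "I k \<in> borel_measurable M" "k \<in> borel_measurable lborel"
    using k by (simp_all add: wiener_integral_measurable square_integrable_def)
  have "(\<integral>\<omega>. complex_of_real (pathwise_integral \<omega>) * cnj (I k \<omega>) \<partial>M)
          = (\<integral>t. complex_of_real (\<phi> t) * (\<integral>\<omega>. complex_of_real (X t \<omega>) * cnj (I k \<omega>) \<partial>M) \<partial>lborel)"
    using complex_wiener_integral_square_integrable[OF W k]
    by (intro integral_pathwise_integral_mult) simp_all
  also have "\<dots> = (\<integral>t. complex_of_real (\<phi> t) * (\<integral>\<xi>. increment_kernel t \<xi> * cnj (k \<xi>) \<partial>lborel) \<partial>lborel)"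
    by (simp add: integral_X_mult_cnj_wiener_integral[OF k])
  also have "\<dots> = (\<integral>\<xi>. transfer \<xi> * cnj (k \<xi>) \<partial>lborel)"
    unfolding transfer_def
    using integrable_norm_increment_kernel_sq integral_norm_increment_kernel_sq_le k
    by (subst integral_weighted_product_swap[where w="\<lambda>t. 2 + \<bar>t\<bar>" and K=spectral_mass])
       (simp_all add: \<phi>_weighted_int sigma_finite_lborel square_integrable_def)
  finally show ?thesis .
qed

text \<open>The residual is orthogonal to every Wiener integral; as each X(t) is real, X(t) equals the
  conjugate of its own representation, so the residual is also orthogonal to the pathwise integral.\<close>

definition residual :: "'a \<Rightarrow> complex" where
  "residual \<omega> = complex_of_real (pathwise_integral \<omega>) - I transfer \<omega>"

lemma wiener_integral_transfer_measurable[measurable]: "I transfer \<in> borel_measurable M"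
  by (rule wiener_integral_measurable[OF square_integrable_transfer])

lemma residual_measurable[measurable]: "residual \<in> borel_measurable M"
  unfolding residual_def[abs_def] by measurable

lemma residual_square_integrable: "integrable M (\<lambda>\<omega>. (norm (residual \<omega>))\<^sup>2)"
  unfolding residual_def
  using pathwise_integral_square_integrable
    complex_wiener_integral_square_integrable[OF W square_integrable_transfer]
  by (intro square_integrable_diff) simp_all

lemma integral_residual_mult_cnj_wiener_integral:
  assumes k: "square_integrable k"
  shows "(\<integral>\<omega>. residual \<omega> * cnj (I k \<omega>) \<partial>M) = 0"
proof -
  have [measurable]: "I k \<in> borel_measurable M"
    by (rule wiener_integral_measurable[OF k])
  have "integrable M (\<lambda>\<omega>. complex_of_real (pathwise_integral \<omega>) * cnj (I k \<omega>))"
    using pathwise_integral_square_integrable complex_wiener_integral_square_integrable[OF W k]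
    by (intro integrable_mult_square_integrable) simp_all
  moreover have "integrable M (\<lambda>\<omega>. I transfer \<omega> * cnj (I k \<omega>))"
    by (rule complex_wiener_integral_isometry(1)[OF W square_integrable_transfer k])
  ultimately have "(\<integral>\<omega>. residual \<omega> * cnj (I k \<omega>) \<partial>M)
      = (\<integral>\<omega>. complex_of_real (pathwise_integral \<omega>) * cnj (I k \<omega>) \<partial>M) - (\<integral>\<omega>. I transfer \<omega> * cnj (I k \<omega>) \<partial>M)"
    unfolding residual_def left_diff_distrib by (rule Bochner_Integration.integral_diff)
  also have "\<dots> = 0"
    by (simp add: integral_pathwise_integral_mult_cnj_wiener_integral[OF k]
          complex_wiener_integral_isometry(2)[OF W square_integrable_transfer k])
  finally show ?thesis .
qed

lemma integral_pathwise_integral_mult_residual: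
  "(\<integral>\<omega>. complex_of_real (pathwise_integral \<omega>) * residual \<omega> \<partial>M) = 0"
proof -
  have X_residual: "(\<integral>\<omega>. complex_of_real (X t \<omega>) * residual \<omega> \<partial>M) = 0" for t
  proof -
    have "AE \<omega> in M. complex_of_real (X t \<omega>) * residual \<omega> = residual \<omega> * cnj (I (increment_kernel t) \<omega>)"
      using X_eq_wiener_integral[of t] by eventually_elim (metis complex_cnj_complex_of_real mult.commute)
    then have "(\<integral>\<omega>. complex_of_real (X t \<omega>) * residual \<omega> \<partial>M)
                 = (\<integral>\<omega>. residual \<omega> * cnj (I (increment_kernel t) \<omega>) \<partial>M)"
      by (rule integral_cong_AE[rotated 2]) measurable
    then show ?thesis
      by (simp add: integral_residual_mult_cnj_wiener_integral[OF square_integrable_increment_kernel])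
  qed
  have "(\<integral>\<omega>. complex_of_real (pathwise_integral \<omega>) * residual \<omega> \<partial>M)
          = (\<integral>t. complex_of_real (\<phi> t) * (\<integral>\<omega>. complex_of_real (X t \<omega>) * residual \<omega> \<partial>M) \<partial>lborel)"
    using residual_square_integrable by (intro integral_pathwise_integral_mult) simp_all
  then show ?thesis
    by (simp add: X_residual)
qed

lemma pathwise_integral_eq_wiener_integral:
  "AE \<omega> in M. complex_of_real (pathwise_integral \<omega>) = I transfer \<omega>"
proof -
  have "integrable M (\<lambda>\<omega>. complex_of_real (pathwise_integral \<omega>) * residual \<omega>)"
    using pathwise_integral_square_integrable residual_square_integrable
    by (intro integrable_mult_square_integrable) simp_all
  moreover have "integrable M (\<lambda>\<omega>. residual \<omega> * cnj (I transfer \<omega>))"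
    using residual_square_integrable complex_wiener_integral_square_integrable[OF W square_integrable_transfer]
    by (intro integrable_mult_square_integrable) simp_all
  moreover have "residual \<omega> * cnj (residual \<omega>)
      = complex_of_real (pathwise_integral \<omega>) * residual \<omega> - residual \<omega> * cnj (I transfer \<omega>)" for \<omega>
    by (simp add: residual_def algebra_simps)
  ultimately have "(\<integral>\<omega>. residual \<omega> * cnj (residual \<omega>) \<partial>M)
      = (\<integral>\<omega>. complex_of_real (pathwise_integral \<omega>) * residual \<omega> \<partial>M)
        - (\<integral>\<omega>. residual \<omega> * cnj (I transfer \<omega>) \<partial>M)"
    by simp
  also have "\<dots> = 0"
    by (simp add: integral_pathwise_integral_mult_residual
          integral_residual_mult_cnj_wiener_integral[OF square_integrable_transfer])
  finally have "complex_of_real (\<integral>\<omega>. (norm (residual \<omega>))\<^sup>2 \<partial>M) = 0"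
    unfolding complex_norm_square[symmetric] integral_complex_of_real .
  then have "AE \<omega> in M. (norm (residual \<omega>))\<^sup>2 = 0"
    using residual_square_integrable by (subst integral_nonneg_eq_0_iff_AE[symmetric]) simp_all
  then show ?thesis
    by eventually_elim (simp add: residual_def)
qed

end

section \<open>Wavelet coefficients\<close>

lemma cnj_fourier: "cnj (fourier \<psi> \<xi>) = (\<integral>u. cis (\<xi> * u) * complex_of_real (\<psi> u) \<partial>lborel)"
  unfolding fourier_def Bochner_Integration.integral_cnj[symmetric] by (simp add: cis_cnj)

lemma integrable_dilation_weighted:
  fixes \<psi> :: "real \<Rightarrow> real"
  assumes [measurable]: "\<psi> \<in> borel_measurable borel" and \<psi>_int: "integrable lborel \<psi>"
    and \<psi>_moment: "integrable lborel (\<lambda>t. t * \<psi> t)" and a: "a > 0"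
  shows "integrable lborel (\<lambda>t. \<bar>\<psi> ((t - b) / a)\<bar> * (2 + \<bar>t\<bar>))"
proof -
  have "integrable lborel (\<lambda>u. \<bar>\<psi> u\<bar> * (2 + \<bar>b + a * u\<bar>))"
  proof (rule Bochner_Integration.integrable_bound)
    show "integrable lborel (\<lambda>u. (2 + \<bar>b\<bar>) * \<bar>\<psi> u\<bar> + a * \<bar>u * \<psi> u\<bar>)"
      using \<psi>_int \<psi>_moment by simp
    show "AE u in lborel. norm (\<bar>\<psi> u\<bar> * (2 + \<bar>b + a * u\<bar>)) \<le> norm ((2 + \<bar>b\<bar>) * \<bar>\<psi> u\<bar> + a * \<bar>u * \<psi> u\<bar>)"
    proof (rule AE_I2)
      fix u
      have "\<bar>\<psi> u\<bar> * (2 + \<bar>b + a * u\<bar>) \<le> \<bar>\<psi> u\<bar> * (2 + \<bar>b\<bar> + a * \<bar>u\<bar>)"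
        using abs_triangle_ineq[of b "a * u"] a by (intro mult_left_mono) (simp_all add: abs_mult)
      then show "norm (\<bar>\<psi> u\<bar> * (2 + \<bar>b + a * u\<bar>)) \<le> norm ((2 + \<bar>b\<bar>) * \<bar>\<psi> u\<bar> + a * \<bar>u * \<psi> u\<bar>)"
        using a by (simp add: abs_mult algebra_simps)
    qed
  qed measurable
  then show ?thesis
    using lborel_integrable_real_affine_iff[of a "\<lambda>t. \<bar>\<psi> ((t - b) / a)\<bar> * (2 + \<bar>t\<bar>)" b] a by simp
qed

lemma integral_dilation_cis_minus_one:
  fixes \<psi> :: "real \<Rightarrow> real"
  assumes [measurable]: "\<psi> \<in> borel_measurable borel" and \<psi>_int: "integrable lborel \<psi>"
    and \<psi>_mean: "integral\<^sup>L lborel \<psi> = 0" and a: "a > 0"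
  shows "(\<integral>t. complex_of_real (\<psi> ((t - b) / a)) * (cis (t * \<xi>) - 1) \<partial>lborel)
           = complex_of_real a * cis (b * \<xi>) * cnj (fourier \<psi> (a * \<xi>))"
proof -
  have cis_int: "integrable lborel (\<lambda>u. cis (a * \<xi> * u) * complex_of_real (\<psi> u))"
    by (rule Bochner_Integration.integrable_bound[OF \<psi>_int]) (simp_all add: norm_mult)
  have "(\<integral>t. complex_of_real (\<psi> ((t - b) / a)) * (cis (t * \<xi>) - 1) \<partial>lborel)
          = complex_of_real a * (\<integral>u. complex_of_real (\<psi> u) * (cis ((b + a * u) * \<xi>) - 1) \<partial>lborel)"
    using lborel_integral_real_affine[where c=a and t=b
        and f="\<lambda>t. complex_of_real (\<psi> ((t - b) / a)) * (cis (t * \<xi>) - 1)"] a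
    by (simp add: scaleR_conv_of_real)
  also have "(\<lambda>u. complex_of_real (\<psi> u) * (cis ((b + a * u) * \<xi>) - 1))
               = (\<lambda>u. cis (b * \<xi>) * (cis (a * \<xi> * u) * complex_of_real (\<psi> u)) - complex_of_real (\<psi> u))"
    by (simp add: algebra_simps flip: cis_mult)
  also have "(\<integral>u. cis (b * \<xi>) * (cis (a * \<xi> * u) * complex_of_real (\<psi> u)) - complex_of_real (\<psi> u) \<partial>lborel)
               = cis (b * \<xi>) * cnj (fourier \<psi> (a * \<xi>))"
    using cis_int \<psi>_int \<psi>_mean by (simp add: cnj_fourier integral_complex_of_real)
  finally show ?thesis
    by (simp only: mult.assoc)
qed

lemma powr_minus_half_mult_self: "a > 0 \<Longrightarrow> a powr (-1/2) * a = sqrt a"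
  by (simp add: powr_minus_divide powr_half_sqrt field_simps real_sqrt_mult_self)

theorem proposition1:
  fixes f :: "real \<Rightarrow> real" and \<psi> :: "real \<Rightarrow> real"
    and M :: "'w measure" and I :: "(real \<Rightarrow> complex) \<Rightarrow> 'w \<Rightarrow> complex"
    and X :: "real \<Rightarrow> 'w \<Rightarrow> real"
  assumes f_meas: "f \<in> borel_measurable borel"
    and f_nonneg: "\<And>\<xi>. f \<xi> \<ge> 0"
    and f_even: "\<And>\<xi>. f (- \<xi>) = f \<xi>"
    and f_int: "integrable lborel (\<lambda>\<xi>. min 1 (\<xi>\<^sup>2) * f \<xi>)"
    and W: "complex_wiener_integral M I"
    and X_meas: "(\<lambda>(t, \<omega>). X t \<omega>) \<in> borel_measurable (lborel \<Otimes>\<^sub>M M)"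
    and X_def: "\<And>t. AE \<omega> in M. complex_of_real (X t \<omega>) =
                  I (\<lambda>\<xi>. (cis (t * \<xi>) - 1) * complex_of_real (sqrt (f \<xi>))) \<omega>"
    and \<psi>_meas: "\<psi> \<in> borel_measurable borel"
    and \<psi>_int: "integrable lborel \<psi>"
    and \<psi>_mean: "integral\<^sup>L lborel \<psi> = 0"
    and \<psi>_moment: "integrable lborel (\<lambda>t. t * \<psi> t)"
    and \<psi>_bdd: "\<exists>C>0. \<forall>t. \<bar>\<psi> t\<bar> \<le> C"
    and \<psi>_hat_bdd: "\<exists>C'>0. \<forall>\<xi>. \<exists>D. (fourier \<psi> has_vector_derivative D) (at \<xi>) \<and>
                         cmod (fourier \<psi> \<xi>) + cmod D \<le> C'"
  shows "\<forall>a>0. \<forall>b::real.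
     (AE \<omega> in M. integrable lborel (\<lambda>t. \<psi> ((t - b) / a) * X t \<omega>)) \<and>
     (AE \<omega> in M. complex_of_real (a powr (-1/2) *
          integral\<^sup>L lborel (\<lambda>t. \<psi> ((t - b) / a) * X t \<omega>)) =
        I (\<lambda>\<xi>. complex_of_real (sqrt a) * cis (b * \<xi>) * cnj (fourier \<psi> (a * \<xi>))
               * complex_of_real (sqrt (f \<xi>))) \<omega>)"
proof (intro allI impI)
  fix a b :: real
  assume a: "a > 0"
  define \<phi> where "\<phi> t = a powr (-1/2) * \<psi> ((t - b) / a)" for t
  interpret spectral_process_functional f M I X \<phi>
  proof unfold_locales
    show "\<phi> \<in> borel_measurable borel"
      unfolding \<phi>_def[abs_def] using \<psi>_meas by measurable
    show "integrable lborel (\<lambda>t. \<bar>\<phi> t\<bar> * (2 + \<bar>t\<bar>))"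
      using integrable_dilation_weighted[OF \<psi>_meas \<psi>_int \<psi>_moment a, of b]
      by (simp add: \<phi>_def abs_mult mult.assoc)
  qed (use assms in auto)
  have transfer_wavelet: "transfer = (\<lambda>\<xi>. complex_of_real (sqrt a) * cis (b * \<xi>)
      * cnj (fourier \<psi> (a * \<xi>)) * complex_of_real (sqrt (f \<xi>)))"
    using integral_dilation_cis_minus_one[OF \<psi>_meas \<psi>_int \<psi>_mean a, of b]
    by (simp add: fun_eq_iff transfer_eq \<phi>_def mult.assoc powr_minus_half_mult_self[OF a, symmetric])
  have "pathwise_integral \<omega> = a powr (-1/2) * (\<integral>t. \<psi> ((t - b) / a) * X t \<omega> \<partial>lborel)" for \<omega>
    by (simp add: pathwise_integral_def \<phi>_def mult.assoc)
  then show "(AE \<omega> in M. integrable lborel (\<lambda>t. \<psi> ((t - b) / a) * X t \<omega>)) \<and>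
     (AE \<omega> in M. complex_of_real (a powr (-1/2) * (\<integral>t. \<psi> ((t - b) / a) * X t \<omega> \<partial>lborel)) =
        I (\<lambda>\<xi>. complex_of_real (sqrt a) * cis (b * \<xi>) * cnj (fourier \<psi> (a * \<xi>))
               * complex_of_real (sqrt (f \<xi>))) \<omega>)"
    using AE_integrable_pathwise pathwise_integral_eq_wiener_integral a
    unfolding transfer_wavelet[symmetric] by (simp add: \<phi>_def mult.assoc)
qed

end
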